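(* Let $N$ be the surface described in the context, with $l>0$. Then no configuration $(x_1,x_2)$ with $x_1,x_2$ in the interior $\{(t,\theta):0<t<l\}$ of the cylinder $C\subset N$ is midpoint secure in $N$.
   Context: Construction of $N$: let $C=[0,l]\times S^1$ be the flat cylinder of length $l>0$ and radius $1$, with points written $(t,\theta)$, $t\in[0,l]$, $\theta\in\mathbb{R}/2\pi\mathbb{Z}$. Let $H_0$ and $H_l$ be two hemispheres of the round unit sphere, and let $N$ be obtained by gluing the equator of $H_0$ isometrically to $\{0\}\times S^1$ and the equator of $H_l$ isometrically to $\{l\}\times S^1$, so that $N$ is a closed $C^1$ surface with a piecewise smooth Riemannian metric; geodesics of $N$ are the $C^1$ curves that are geodesics in each of the pieces $C,H_0,H_l$. Conventions: a geodesic has positive finite length and is parametrized by $[0,1]$ proportionally to arclength. $G(x,y)$ is the set of geodesics $\gamma$ with $\gamma(0)=x$, $\gamma(1)=y$. A set $B$ is a midpoint blocking set for $G(x,y)$ if $\gamma(1/2)\in B$ for every $\gamma\in G(x,y)$ (endpoints allowed in $B$); $(x,y)$ is midpoint secure if $G(x,y)$ has a finite midpoint blocking set. *)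

theory Defs
  imports "HOL-Analysis.Analysis"
begin

text \<open>The surface N is realised as the C1 capsule in R^3: the flat cylinder
  x^2+y^2=1, 0<=z<=l (point (t,theta) of C corresponds to (cos theta, sin theta, t)),
  capped by the lower unit hemisphere centred at the origin and the upper unit
  hemisphere centred at (0,0,l). The induced metric is exactly the glued metric.\<close>

definition cyl :: "real \<Rightarrow> (real^3) set" where
  "cyl l = {p. (p$1)\<^sup>2 + (p$2)\<^sup>2 = 1 \<and> 0 \<le> p$3 \<and> p$3 \<le> l}"

definition cyl_int :: "real \<Rightarrow> (real^3) set" where
  "cyl_int l = {p. (p$1)\<^sup>2 + (p$2)\<^sup>2 = 1 \<and> 0 < p$3 \<and> p$3 < l}"

definition hem0 :: "(real^3) set" where
  "hem0 = {p. (p$1)\<^sup>2 + (p$2)\<^sup>2 + (p$3)\<^sup>2 = 1 \<and> p$3 \<le> 0}"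

definition heml :: "real \<Rightarrow> (real^3) set" where
  "heml l = {p. (p$1)\<^sup>2 + (p$2)\<^sup>2 + (p$3 - l)\<^sup>2 = 1 \<and> l \<le> p$3}"

definition surfN :: "real \<Rightarrow> (real^3) set" where
  "surfN l = cyl l \<union> hem0 \<union> heml l"

definition cyl_geod :: "(real \<Rightarrow> real^3) \<Rightarrow> real \<Rightarrow> real \<Rightarrow> bool" where
  "cyl_geod \<gamma> a b \<longleftrightarrow> (\<exists>\<alpha> \<beta> c d. \<forall>s\<in>{a..b}.
      \<gamma> s = vector [cos (\<alpha> + \<beta> * s), sin (\<alpha> + \<beta> * s), c + d * s])"

definition sph_geod :: "real^3 \<Rightarrow> (real \<Rightarrow> real^3) \<Rightarrow> real \<Rightarrow> real \<Rightarrow> bool" where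
  "sph_geod ctr \<gamma> a b \<longleftrightarrow> (\<exists>u v \<omega>. norm u = 1 \<and> norm v = 1 \<and> inner u v = 0 \<and>
      (\<forall>s\<in>{a..b}. \<gamma> s = ctr + cos (\<omega> * s) *\<^sub>R u + sin (\<omega> * s) *\<^sub>R v))"

definition is_geodesic :: "real \<Rightarrow> (real \<Rightarrow> real^3) \<Rightarrow> bool" where
  "is_geodesic l \<gamma> \<longleftrightarrow>
     \<gamma> ` {0..1} \<subseteq> surfN l \<and>
     (\<exists>\<gamma>' L. L > 0 \<and> continuous_on {0..1} \<gamma>' \<and>
        (\<forall>s\<in>{0..1}. (\<gamma> has_vector_derivative \<gamma>' s) (at s within {0..1}) \<and> norm (\<gamma>' s) = L)) \<and>
     (\<forall>a b. 0 \<le> a \<longrightarrow> a \<le> b \<longrightarrow> b \<le> 1 \<longrightarrow>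
        (\<gamma> ` {a..b} \<subseteq> cyl l \<longrightarrow> cyl_geod \<gamma> a b) \<and>
        (\<gamma> ` {a..b} \<subseteq> hem0 \<longrightarrow> sph_geod 0 \<gamma> a b) \<and>
        (\<gamma> ` {a..b} \<subseteq> heml l \<longrightarrow> sph_geod (vector [0, 0, l]) \<gamma> a b))"

definition geods :: "real \<Rightarrow> real^3 \<Rightarrow> real^3 \<Rightarrow> (real \<Rightarrow> real^3) set" where
  "geods l x y = {\<gamma>. is_geodesic l \<gamma> \<and> \<gamma> 0 = x \<and> \<gamma> 1 = y}"

definition midpoint_blocking :: "real \<Rightarrow> real^3 \<Rightarrow> real^3 \<Rightarrow> (real^3) set \<Rightarrow> bool" where
  "midpoint_blocking l x y B \<longleftrightarrow> (\<forall>\<gamma>\<in>geods l x y. \<gamma> (1/2) \<in> B)"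

definition midpoint_secure :: "real \<Rightarrow> real^3 \<Rightarrow> real^3 \<Rightarrow> bool" where
  "midpoint_secure l x y \<longleftrightarrow> (\<exists>B. finite B \<and> midpoint_blocking l x y B)"

end

theory Submission
  imports Defs
begin

text \<open>A geodesic from \<open>x\<^sub>1 = (\<theta>, z\<^sub>1)\<close> climbs along a helix to the upper rim, crosses the
  upper cap along half a great circle, which lands at the antipodal rim point, and descends
  along a helix of the same slope to \<open>x\<^sub>2 = (\<theta> + D + \<pi>, z\<^sub>2)\<close>. Unrolled, the two helices form
  a straight segment of horizontal extent \<open>D\<close> and vertical extent \<open>h = 2l - z\<^sub>1 - z\<^sub>2\<close>, so their
  direction has vertical component \<open>v = h / sqrt (D\<^sup>2 + h\<^sup>2)\<close>. Winding around the cylinder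
  once more adds \<open>2\<pi>\<close> to \<open>D\<close> and strictly decreases \<open>v\<close>. For large \<open>D\<close> the height of the
  midpoint is a strictly monotone function of \<open>v\<close>, so the midpoints of these geodesics are
  pairwise distinct and no finite set blocks them all.\<close>

lemma vector3_eq_iff:
  "((vector [a, b, c] :: real^3) = vector [a', b', c']) \<longleftrightarrow> a = a' \<and> b = b' \<and> c = c'"
  by (auto simp: vec_eq_iff forall_3)

lemma scaleR_vector3: "r *\<^sub>R (vector [a, b, c] :: real^3) = vector [r * a, r * b, r * c]"
  by (simp add: vec_eq_iff forall_3)

lemma add_vector3: "(vector [a, b, c] :: real^3) + vector [a', b', c'] = vector [a + a', b + b', c + c']"
  by (simp add: vec_eq_iff forall_3)

lemma vector3_axis: "(vector [a, b, c] :: real^3) = a *\<^sub>R axis 1 1 + b *\<^sub>R axis 2 1 + c *\<^sub>R axis 3 1"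
  by (simp add: vec_eq_iff forall_3 axis_def)

lemma norm_vector3: "norm (vector [a, b, c] :: real^3) = sqrt (a\<^sup>2 + b\<^sup>2 + c\<^sup>2)"
  by (simp add: norm_vec_def L2_set_def sum_3)

lemma inner_vector3: "inner (vector [a, b, c] :: real^3) (vector [a', b', c']) = a * a' + b * b' + c * c'"
  by (simp add: inner_vec_def sum_3)

lemma has_vector_derivative_vector3:
  assumes "(a has_real_derivative a') (at s within S)" "(b has_real_derivative b') (at s within S)"
    "(c has_real_derivative c') (at s within S)"
  shows "((\<lambda>s. vector [a s, b s, c s] :: real^3) has_vector_derivative vector [a', b', c'])
    (at s within S)"
  unfolding vector3_axis using assms by (auto intro!: derivative_eq_intros)

lemma continuous_on_vector3:
  assumes "continuous_on S a" "continuous_on S b" "continuous_on S c"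
  shows "continuous_on S (\<lambda>x. vector [a x, b x, c x] :: real^3)"
  unfolding vector3_axis using assms by (intro continuous_intros)

lemma has_vector_derivative_within_Un:
  assumes "(f has_vector_derivative f') (at x within S)" "(f has_vector_derivative f') (at x within T)"
  shows "(f has_vector_derivative f') (at x within (S \<union> T))"
  using assms unfolding has_vector_derivative_def has_derivative_within Lim_within_Un by auto

lemma has_vector_derivative_within_not_closure:
  assumes "x \<notin> closure S"
  shows "(f has_vector_derivative f') (at x within S)"
proof -
  have "at x within S = bot"
    using assms by (simp add: not_in_closure_trivial_limitI trivial_limit_def)
  then show ?thesis
    unfolding has_vector_derivative_def has_derivative_within by (auto intro: bounded_linear_scaleR_left)
qed

lemma has_vector_derivative_within_interval_cong:
  assumes "(f has_vector_derivative y) (at s within {p..q})" "\<And>t. t \<in> {p..q} \<Longrightarrow> g t = f t"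
    "s \<in> {p..q} \<Longrightarrow> z = y"
  shows "(g has_vector_derivative z) (at s within {p..q})"
proof (cases "s \<in> {p..q}")
  case True
  then show ?thesis using assms has_vector_derivative_transform[of s "{p..q}" g f y] by auto
next
  case False
  then show ?thesis by (intro has_vector_derivative_within_not_closure) simp
qed

lemma rotated_circle_sq:
  fixes c s cp sp u v :: real
  assumes "cp\<^sup>2 + sp\<^sup>2 = 1" "u\<^sup>2 + v\<^sup>2 = 1" "c\<^sup>2 + s\<^sup>2 = 1"
  shows "(c * cp - s * u * sp)\<^sup>2 + (c * sp + s * u * cp)\<^sup>2 + (s * v)\<^sup>2 = 1"
  using assms by algebra

lemma scaled_sin_cos_sq: "(- (a::real) * sin x)\<^sup>2 + (a * cos x)\<^sup>2 = a\<^sup>2"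
  using sin_cos_squared_add[of x] by algebra

definition slope :: "real \<Rightarrow> real \<Rightarrow> real" where
  "slope h D = h / sqrt (D\<^sup>2 + h\<^sup>2)"

definition mid_height :: "real \<Rightarrow> real \<Rightarrow> real \<Rightarrow> real \<Rightarrow> real" where
  "mid_height l z1 z2 v = (if z1 = z2 then l + v else l - \<bar>z1 - z2\<bar> / 2 + v * pi / 2)"

text \<open>The helices have total length
  \<open>R\<close>, the ascent has length \<open>A\<close> and reaches the rim at angle \<open>rim_angle\<close>; \<open>(u, v)\<close> is
  their unit direction in the unrolled cylinder.\<close>

locale cap_geodesic =
  fixes l \<theta> z1 z2 D :: real
  assumes z1: "0 < z1" "z1 < l" and z2: "0 < z2" "z2 < l"
begin

definition "h = 2 * l - z1 - z2"
definition "R = sqrt (D\<^sup>2 + h\<^sup>2)"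
definition "u = D / R"
definition "v = h / R"
definition "A = (l - z1) * R / h"
definition "len = R + pi"
definition "s1 = A / len"
definition "s2 = (A + pi) / len"
definition "rim_angle = \<theta> + u * A"

lemma h_pos: "h > 0" using z1 z2 by (simp add: h_def)
lemma R_pos: "R > 0" using h_pos by (simp add: R_def add_nonneg_pos)
lemma v_pos: "v > 0" using h_pos R_pos by (simp add: v_def)
lemma v_eq_slope: "v = slope (2 * l - z1 - z2) D" by (simp add: v_def R_def h_def slope_def)

lemma u_v_sq: "u\<^sup>2 + v\<^sup>2 = 1"
proof -
  have "R\<^sup>2 = D\<^sup>2 + h\<^sup>2" unfolding R_def by (simp add: add_nonneg_nonneg)
  then show ?thesis
    using R_pos h_pos by (simp add: u_def v_def power_divide add_divide_distrib[symmetric])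
qed

lemma v_A: "v * A = l - z1" using h_pos R_pos by (simp add: v_def A_def field_simps)
lemma u_R: "u * R = D" using R_pos by (simp add: u_def)
lemma v_R: "v * R = h" using R_pos by (simp add: v_def)
lemma A_pos: "A > 0" using z1 h_pos R_pos by (simp add: A_def)
lemma A_less_R: "A < R" using z1 z2 h_pos R_pos by (simp add: A_def h_def field_simps)
lemma len_pos: "len > 0" using R_pos by (simp add: len_def add_pos_pos)
lemma s1_pos: "0 < s1" using A_pos len_pos by (simp add: s1_def)
lemma s1_less_s2: "s1 < s2" using len_pos by (simp add: s1_def s2_def divide_strict_right_mono)
lemma s2_less_1: "s2 < 1" using A_less_R len_pos by (simp add: s2_def len_def)
lemma len_s1: "len * s1 = A" using len_pos by (simp add: s1_def)
lemma len_s2: "len * s2 = A + pi" using len_pos by (simp add: s2_def)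

definition "descent_angle0 = rim_angle + pi - u * (A + pi)"
definition "descent_height0 = l + v * (A + pi)"

definition "ascent s = (vector [cos (\<theta> + (u * len) * s), sin (\<theta> + (u * len) * s),
  z1 + (v * len) * s] :: real^3)"
definition "ascent' s = (vector [- (u * len) * sin (\<theta> + (u * len) * s),
  (u * len) * cos (\<theta> + (u * len) * s), v * len] :: real^3)"
definition "cap_arc s = (vector [cos (len * s - A) * cos rim_angle - sin (len * s - A) * u * sin rim_angle,
  cos (len * s - A) * sin rim_angle + sin (len * s - A) * u * cos rim_angle,
  l + sin (len * s - A) * v] :: real^3)"
definition "cap_arc' s = (vector
  [len * (- sin (len * s - A) * cos rim_angle - cos (len * s - A) * u * sin rim_angle),
   len * (- sin (len * s - A) * sin rim_angle + cos (len * s - A) * u * cos rim_angle),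
   len * (cos (len * s - A) * v)] :: real^3)"
definition "descent s = (vector [cos (descent_angle0 + (u * len) * s),
  sin (descent_angle0 + (u * len) * s), descent_height0 + (- (v * len)) * s] :: real^3)"
definition "descent' s = (vector [- (u * len) * sin (descent_angle0 + (u * len) * s),
  (u * len) * cos (descent_angle0 + (u * len) * s), - (v * len)] :: real^3)"

definition "curve s = (if s \<le> s1 then ascent s else if s \<le> s2 then cap_arc s else descent s)"
definition "curve' s = (if s \<le> s1 then ascent' s else if s \<le> s2 then cap_arc' s else descent' s)"

lemma ascent_s1: "ascent s1 = cap_arc s1" "ascent' s1 = cap_arc' s1"
proof -
  have "\<theta> + u * len * s1 = rim_angle" "z1 + v * len * s1 = l" "len * s1 - A = 0"
    using len_s1 v_A by (simp_all add: rim_angle_def mult.assoc)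
  then show "ascent s1 = cap_arc s1" "ascent' s1 = cap_arc' s1"
    unfolding ascent_def cap_arc_def ascent'_def cap_arc'_def vector3_eq_iff by simp_all
qed

lemma cap_arc_s2: "cap_arc s2 = descent s2" "cap_arc' s2 = descent' s2"
proof -
  have "descent_angle0 + u * len * s2 = rim_angle + pi" "len * s2 - A = pi"
    "descent_height0 + - (v * len) * s2 = l"
    using len_s2 by (simp_all add: descent_angle0_def descent_height0_def mult.assoc)
  then show "cap_arc s2 = descent s2" "cap_arc' s2 = descent' s2"
    unfolding descent_def cap_arc_def descent'_def cap_arc'_def vector3_eq_iff by simp_all
qed

lemma curve_ascent: "s \<le> s1 \<Longrightarrow> curve s = ascent s" "s \<le> s1 \<Longrightarrow> curve' s = ascent' s"
  by (simp_all add: curve_def curve'_def)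

lemma curve_cap_arc:
  "s1 \<le> s \<Longrightarrow> s \<le> s2 \<Longrightarrow> curve s = cap_arc s"
  "s1 \<le> s \<Longrightarrow> s \<le> s2 \<Longrightarrow> curve' s = cap_arc' s"
  using ascent_s1 by (auto simp: curve_def curve'_def)

lemma curve_descent: "s2 \<le> s \<Longrightarrow> curve s = descent s" "s2 \<le> s \<Longrightarrow> curve' s = descent' s"
  using cap_arc_s2 s1_less_s2 by (auto simp: curve_def curve'_def)

lemma ascent_height: "ascent s $ 3 = z1 + v * (len * s)" by (simp add: ascent_def)
lemma cap_arc_height: "cap_arc s $ 3 = l + sin (len * s - A) * v" by (simp add: cap_arc_def)
lemma descent_height: "descent s $ 3 = l - v * (len * s - A - pi)"
  by (simp add: descent_def descent_height0_def algebra_simps)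

lemma ascent_height_bounds:
  assumes "0 \<le> s" "s \<le> s1"
  shows "z1 \<le> ascent s $ 3" "ascent s $ 3 \<le> l" "s < s1 \<Longrightarrow> ascent s $ 3 < l"
proof -
  have "0 \<le> len * s" "len * s \<le> A" "s < s1 \<Longrightarrow> len * s < A"
    using assms len_pos by (simp_all flip: len_s1)
  then have "0 \<le> v * (len * s)" "v * (len * s) \<le> l - z1" "s < s1 \<Longrightarrow> v * (len * s) < l - z1"
    using v_pos by (simp_all flip: v_A)
  then show "z1 \<le> ascent s $ 3" "ascent s $ 3 \<le> l" "s < s1 \<Longrightarrow> ascent s $ 3 < l"
    unfolding ascent_height by simp_all
qed

lemma descent_height_bounds:
  assumes "s2 \<le> s" "s \<le> 1"
  shows "z2 \<le> descent s $ 3" "descent s $ 3 \<le> l" "s2 < s \<Longrightarrow> descent s $ 3 < l"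
proof -
  have "A + pi \<le> len * s" and up: "len * s \<le> len" and "s2 < s \<Longrightarrow> A + pi < len * s"
    using assms len_pos by (simp_all add: mult_left_le flip: len_s2)
  moreover have "v * (len - A - pi) = l - z2"
    using v_R v_A unfolding len_def h_def by (simp add: algebra_simps)
  moreover have "v * (len * s - A - pi) \<le> v * (len - A - pi)"
    using up v_pos by (intro mult_left_mono) auto
  ultimately show "z2 \<le> descent s $ 3" "descent s $ 3 \<le> l" "s2 < s \<Longrightarrow> descent s $ 3 < l"
    unfolding descent_height using v_pos by auto
qed

lemma cap_arc_height_bounds:
  assumes "s1 \<le> s" "s \<le> s2"
  shows "l \<le> cap_arc s $ 3" "s1 < s \<Longrightarrow> s < s2 \<Longrightarrow> l < cap_arc s $ 3"
proof -
  have "A \<le> len * s" "s1 < s \<Longrightarrow> A < len * s" using assms len_pos by (simp_all flip: len_s1)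
  moreover have "len * s \<le> A + pi" "s < s2 \<Longrightarrow> len * s < A + pi"
    using assms len_pos by (simp_all flip: len_s2)
  ultimately show "l \<le> cap_arc s $ 3" "s1 < s \<Longrightarrow> s < s2 \<Longrightarrow> l < cap_arc s $ 3"
    unfolding cap_arc_height using v_pos by (simp_all add: sin_ge_zero sin_gt_zero)
qed

lemma curve_in_surfN:
  assumes "0 \<le> s" "s \<le> 1"
  shows "curve s \<in> surfN l" "0 < curve s $ 3"
proof -
  consider "s \<le> s1" | "s1 \<le> s" "s \<le> s2" | "s2 \<le> s" by linarith
  then have "curve s \<in> surfN l \<and> 0 < curve s $ 3"
  proof cases
    case 1
    then show ?thesis using ascent_height_bounds[of s] assms z1 curve_ascent
      by (auto simp: surfN_def cyl_def ascent_def)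
  next
    case 2
    have "(cap_arc s $ 1)\<^sup>2 + (cap_arc s $ 2)\<^sup>2 + (cap_arc s $ 3 - l)\<^sup>2 = 1"
      using rotated_circle_sq[of "cos rim_angle" "sin rim_angle" u v "cos (len * s - A)"] u_v_sq
      by (simp add: cap_arc_def)
    then show ?thesis using cap_arc_height_bounds[OF 2] curve_cap_arc[OF 2] z1
      by (auto simp: surfN_def heml_def)
  next
    case 3
    then show ?thesis using descent_height_bounds[of s] assms z2 curve_descent
      by (auto simp: surfN_def cyl_def descent_def)
  qed
  then show "curve s \<in> surfN l" "0 < curve s $ 3" by auto
qed

lemma ascent_has_vector_derivative: "(ascent has_vector_derivative ascent' s) (at s within S)"
  unfolding ascent_def[abs_def] ascent'_def
  by (rule has_vector_derivative_vector3) (auto intro!: derivative_eq_intros)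

lemma cap_arc_has_vector_derivative: "(cap_arc has_vector_derivative cap_arc' s) (at s within S)"
  unfolding cap_arc_def[abs_def] cap_arc'_def
  by (rule has_vector_derivative_vector3) (auto intro!: derivative_eq_intros simp: algebra_simps)

lemma descent_has_vector_derivative: "(descent has_vector_derivative descent' s) (at s within S)"
  unfolding descent_def[abs_def] descent'_def
  by (rule has_vector_derivative_vector3) (auto intro!: derivative_eq_intros)

lemma curve_has_vector_derivative: "(curve has_vector_derivative curve' s) (at s within {0..1})"
proof -
  have "(curve has_vector_derivative curve' s) (at s within {0..s1})"
    by (rule has_vector_derivative_within_interval_cong[OF ascent_has_vector_derivative])
      (auto simp: curve_ascent)
  moreover have "(curve has_vector_derivative curve' s) (at s within {s1..s2})"
    by (rule has_vector_derivative_within_interval_cong[OF cap_arc_has_vector_derivative])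
      (auto simp: curve_cap_arc)
  moreover have "(curve has_vector_derivative curve' s) (at s within {s2..1})"
    by (rule has_vector_derivative_within_interval_cong[OF descent_has_vector_derivative])
      (auto simp: curve_descent)
  moreover have "{0..1} = {0..s1} \<union> {s1..s2} \<union> {s2..1}" using s1_pos s1_less_s2 s2_less_1 by auto
  ultimately show ?thesis by (simp add: has_vector_derivative_within_Un)
qed

lemma norm_curve': "norm (curve' s) = len"
proof -
  have sqrt_len: "sqrt (len\<^sup>2) = len" using len_pos by simp
  have "(- (u * len) * sin \<phi>)\<^sup>2 + (u * len * cos \<phi>)\<^sup>2 + (v * len)\<^sup>2 = len\<^sup>2" for \<phi>
  proof -
    have "(- (u * len) * sin \<phi>)\<^sup>2 + (u * len * cos \<phi>)\<^sup>2 + (v * len)\<^sup>2 = len\<^sup>2 * (u\<^sup>2 + v\<^sup>2)"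
      unfolding scaled_sin_cos_sq by (simp add: power_mult_distrib algebra_simps)
    then show ?thesis using u_v_sq by simp
  qed
  then have "norm (ascent' t) = len" "norm (descent' t) = len" for t
    unfolding ascent'_def descent'_def norm_vector3 using sqrt_len by simp_all
  moreover have "norm (cap_arc' t) = len" for t
  proof -
    have "(len * (- sin (len * t - A) * cos rim_angle - cos (len * t - A) * u * sin rim_angle))\<^sup>2 +
      (len * (- sin (len * t - A) * sin rim_angle + cos (len * t - A) * u * cos rim_angle))\<^sup>2 +
      (len * (cos (len * t - A) * v))\<^sup>2
      = len\<^sup>2 * (((- sin (len * t - A)) * cos rim_angle - cos (len * t - A) * u * sin rim_angle)\<^sup>2 +
      ((- sin (len * t - A)) * sin rim_angle + cos (len * t - A) * u * cos rim_angle)\<^sup>2 +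
      (cos (len * t - A) * v)\<^sup>2)"
      by algebra
    also have "\<dots> = len\<^sup>2" by (subst rotated_circle_sq) (simp_all add: u_v_sq)
    finally show ?thesis unfolding cap_arc'_def norm_vector3 using sqrt_len by simp
  qed
  ultimately show ?thesis by (simp add: curve'_def)
qed

lemma continuous_on_curve': "continuous_on {0..1} curve'"
proof -
  have "continuous_on {0..s1} curve'"
    by (rule continuous_on_eq[of _ ascent'])
      (auto simp: ascent'_def curve_ascent intro!: continuous_on_vector3 continuous_intros)
  moreover have "continuous_on {s1..s2} curve'"
    by (rule continuous_on_eq[of _ cap_arc'])
      (auto simp: cap_arc'_def curve_cap_arc intro!: continuous_on_vector3 continuous_intros)
  moreover have "continuous_on {s2..1} curve'"
    by (rule continuous_on_eq[of _ descent'])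
      (auto simp: descent'_def curve_descent intro!: continuous_on_vector3 continuous_intros)
  moreover have "{0..1} = ({0..s1} \<union> {s1..s2}) \<union> {s2..1}" using s1_pos s1_less_s2 s2_less_1 by auto
  ultimately show ?thesis by (metis continuous_on_closed_Un closed_atLeastAtMost closed_Un)
qed

definition "cap_u = (vector [cos A * cos rim_angle + sin A * u * sin rim_angle,
  cos A * sin rim_angle - sin A * u * cos rim_angle, - sin A * v] :: real^3)"
definition "cap_v = (vector [sin A * cos rim_angle - cos A * u * sin rim_angle,
  sin A * sin rim_angle + cos A * u * cos rim_angle, cos A * v] :: real^3)"

lemma cap_arc_great_circle: "cap_arc s = vector [0, 0, l] + cos (len * s) *\<^sub>R cap_u + sin (len * s) *\<^sub>R cap_v"
  unfolding cap_arc_def cap_u_def cap_v_def scaleR_vector3 add_vector3 vector3_eq_iff cos_diff sin_diff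
  by (simp add: algebra_simps)

lemma cap_orthonormal: "norm cap_u = 1" "norm cap_v = 1" "inner cap_u cap_v = 0"
proof -
  have p: "(cos rim_angle)\<^sup>2 + (sin rim_angle)\<^sup>2 = 1" "(cos A)\<^sup>2 + (sin A)\<^sup>2 = 1" by simp_all
  have "(cos A * cos rim_angle + sin A * u * sin rim_angle)\<^sup>2 +
    (cos A * sin rim_angle - sin A * u * cos rim_angle)\<^sup>2 + (- sin A * v)\<^sup>2 = 1"
    "(sin A * cos rim_angle - cos A * u * sin rim_angle)\<^sup>2 +
    (sin A * sin rim_angle + cos A * u * cos rim_angle)\<^sup>2 + (cos A * v)\<^sup>2 = 1"
    "(cos A * cos rim_angle + sin A * u * sin rim_angle) * (sin A * cos rim_angle - cos A * u * sin rim_angle) +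
    (cos A * sin rim_angle - sin A * u * cos rim_angle) * (sin A * sin rim_angle + cos A * u * cos rim_angle) +
    (- sin A * v) * (cos A * v) = 0"
    using p u_v_sq by algebra+
  then show "norm cap_u = 1" "norm cap_v = 1" "inner cap_u cap_v = 0"
    unfolding cap_u_def cap_v_def norm_vector3 inner_vector3 by simp_all
qed

lemma curve_in_cyl_cases:
  assumes "0 \<le> a" "a \<le> b" "b \<le> 1" "curve ` {a..b} \<subseteq> cyl l"
  shows "b \<le> s1 \<or> s2 \<le> a"
proof (rule ccontr)
  assume "\<not> (b \<le> s1 \<or> s2 \<le> a)"
  define t where "t = (max a s1 + min b s2) / 2"
  have t: "a \<le> t" "t \<le> b" "s1 < t" "t < s2"
    using \<open>\<not> (b \<le> s1 \<or> s2 \<le> a)\<close> assms s1_less_s2 unfolding t_def by auto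
  then have "curve t \<in> cyl l" using assms by auto
  moreover have "l < curve t $ 3" using cap_arc_height_bounds[of t] curve_cap_arc[of t] t by auto
  ultimately show False by (simp add: cyl_def)
qed

lemma curve_in_heml_cases:
  assumes "0 \<le> a" "a \<le> b" "b \<le> 1" "curve ` {a..b} \<subseteq> heml l"
  shows "s1 \<le> a" "b \<le> s2"
proof -
  have "curve a \<in> heml l" "curve b \<in> heml l" using assms by auto
  then have "\<not> curve a $ 3 < l" "\<not> curve b $ 3 < l" by (auto simp: heml_def)
  then show "s1 \<le> a" "b \<le> s2"
    using ascent_height_bounds(3)[of a] curve_ascent(1)[of a] descent_height_bounds(3)[of b]
      curve_descent(1)[of b] assms(1-3) by (cases "s1 \<le> a", auto, cases "b \<le> s2", auto)
qed

lemma curve_is_geodesic: "is_geodesic l curve"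
  unfolding is_geodesic_def
proof (intro conjI allI impI)
  show "curve ` {0..1} \<subseteq> surfN l" using curve_in_surfN by auto
  show "\<exists>\<gamma>' L. L > 0 \<and> continuous_on {0..1} \<gamma>' \<and>
      (\<forall>s\<in>{0..1}. (curve has_vector_derivative \<gamma>' s) (at s within {0..1}) \<and> norm (\<gamma>' s) = L)"
    using continuous_on_curve' curve_has_vector_derivative norm_curve' len_pos by blast
next
  fix a b :: real
  assume ab: "0 \<le> a" "a \<le> b" "b \<le> 1"
  show "cyl_geod curve a b" if "curve ` {a..b} \<subseteq> cyl l"
    using curve_in_cyl_cases[OF ab that] unfolding cyl_geod_def
  proof
    assume "b \<le> s1"
    then show "\<exists>\<alpha> \<beta> c d. \<forall>s\<in>{a..b}. curve s = vector [cos (\<alpha> + \<beta> * s), sin (\<alpha> + \<beta> * s), c + d * s]"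
      by (intro exI[of _ \<theta>] exI[of _ "u * len"] exI[of _ z1] exI[of _ "v * len"])
        (auto simp: curve_ascent ascent_def)
  next
    assume "s2 \<le> a"
    then show "\<exists>\<alpha> \<beta> c d. \<forall>s\<in>{a..b}. curve s = vector [cos (\<alpha> + \<beta> * s), sin (\<alpha> + \<beta> * s), c + d * s]"
      by (intro exI[of _ descent_angle0] exI[of _ "u * len"] exI[of _ descent_height0]
          exI[of _ "- (v * len)"]) (auto simp: curve_descent descent_def)
  qed
  show "sph_geod 0 curve a b" if "curve ` {a..b} \<subseteq> hem0"
  proof -
    have "curve a \<in> hem0" using that ab by auto
    then show ?thesis using curve_in_surfN(2)[of a] ab by (simp add: hem0_def)
  qed
  show "sph_geod (vector [0, 0, l]) curve a b" if "curve ` {a..b} \<subseteq> heml l"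
    using curve_in_heml_cases[OF ab that] cap_orthonormal unfolding sph_geod_def
    by (intro exI[of _ cap_u] exI[of _ cap_v] exI[of _ len]) (auto simp: curve_cap_arc cap_arc_great_circle)
qed

lemma curve_0: "curve 0 = vector [cos \<theta>, sin \<theta>, z1]"
  using s1_pos by (simp add: curve_ascent ascent_def)

lemma curve_1: "curve 1 = vector [cos (\<theta> + D + pi), sin (\<theta> + D + pi), z2]"
proof -
  have "descent_angle0 + u * len * 1 = \<theta> + D + pi" "descent_height0 + - (v * len) * 1 = z2"
    using u_R v_R v_A by (simp_all add: descent_angle0_def descent_height0_def rim_angle_def
        len_def h_def algebra_simps)
  then show ?thesis using s2_less_1 by (simp add: curve_descent descent_def)
qed

text \<open>The midpoint, at arclength \<open>(R + \<pi>) / 2\<close>, lies on the longer helix once the helix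
  lengths \<open>A\<close> and \<open>R - A\<close> differ by at least the length \<open>\<pi>\<close> of the cap arc, i.e. once
  \<open>\<bar>z\<^sub>1 - z\<^sub>2\<bar> \<ge> v \<pi>\<close>; if \<open>z\<^sub>1 = z\<^sub>2\<close> it is the top of the cap arc.\<close>

lemma curve_midpoint_height:
  assumes "z1 = z2 \<or> v * pi \<le> \<bar>z1 - z2\<bar>"
  shows "curve (1/2) $ 3 = mid_height l z1 z2 v"
proof -
  have key: "v * (R - 2 * A) = z1 - z2" using v_R v_A by (simp add: h_def algebra_simps)
  consider "z1 = z2" | "z1 > z2" "v * pi \<le> z1 - z2" | "z1 < z2" "v * pi \<le> z2 - z1"
    using assms by linarith
  then show ?thesis
  proof cases
    case 1
    then have "R = 2 * A" using key v_pos by simp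
    then have m: "len * (1/2) - A = pi / 2" by (simp add: len_def field_simps)
    then have "len * s1 \<le> len * (1/2)" "len * (1/2) \<le> len * s2"
      using len_s1 len_s2 pi_gt_zero by linarith+
    then have "s1 \<le> 1/2" "1/2 \<le> s2" using len_pos by simp_all
    then show ?thesis using 1 unfolding curve_cap_arc(1)[OF \<open>s1 \<le> 1/2\<close> \<open>1/2 \<le> s2\<close>] cap_arc_height m
      by (simp add: mid_height_def)
  next
    case 2
    have e: "v * (len * (1/2) - A - pi) = (z1 - z2 - v * pi) / 2"
      using key by (simp add: len_def algebra_simps)
    then have "v * (len * (1/2) - A - pi) \<ge> 0" using 2 by simp
    then have "len * (1/2) - A - pi \<ge> 0" using v_pos by (simp add: zero_le_mult_iff)
    then have "s2 \<le> 1/2" using len_s2 len_pos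
      by (metis diff_ge_0_iff_ge diff_diff_eq mult_le_cancel_left_pos)
    then show ?thesis using 2 e unfolding curve_descent(1)[OF \<open>s2 \<le> 1/2\<close>] descent_height
      by (simp add: mid_height_def field_simps)
  next
    case 3
    have "v * (A - len * (1/2)) = (z2 - z1 - v * pi) / 2" using key by (simp add: len_def algebra_simps)
    then have "v * (A - len * (1/2)) \<ge> 0" using 3 by simp
    then have "A - len * (1/2) \<ge> 0" using v_pos by (simp add: zero_le_mult_iff)
    then have "1/2 \<le> s1" using len_s1 len_pos by (metis diff_ge_0_iff_ge mult_le_cancel_left_pos)
    moreover have "v * (len * (1/2)) = (h + v * pi) / 2" using v_R by (simp add: len_def algebra_simps)
    ultimately show ?thesis
      using 3 unfolding curve_ascent(1)[OF \<open>1/2 \<le> s1\<close>] ascent_height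
      by (simp add: mid_height_def h_def field_simps)
  qed
qed

end

lemma cap_geodesic_exists:
  assumes "0 < z1" "z1 < l" "0 < z2" "z2 < l"
    and "z1 = z2 \<or> slope (2 * l - z1 - z2) D * pi \<le> \<bar>z1 - z2\<bar>"
  shows "\<exists>\<gamma> \<in> geods l (vector [cos \<theta>, sin \<theta>, z1])
      (vector [cos (\<theta> + D + pi), sin (\<theta> + D + pi), z2]).
    \<gamma> (1/2) $ 3 = mid_height l z1 z2 (slope (2 * l - z1 - z2) D)"
proof -
  interpret cap_geodesic l \<theta> z1 z2 D using assms by unfold_locales
  show ?thesis
    using curve_is_geodesic curve_0 curve_1 curve_midpoint_height assms(5)
    unfolding geods_def v_eq_slope by blast
qed

lemma slope_le: "h > 0 \<Longrightarrow> D > 0 \<Longrightarrow> slope h D \<le> h / D"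
  unfolding slope_def by (intro divide_left_mono real_le_rsqrt) (auto intro!: mult_pos_pos add_nonneg_pos)

lemma slope_strict_decreasing:
  assumes "h > 0" "0 \<le> D" "D < D'"
  shows "slope h D' < slope h D"
proof -
  have "sqrt (D\<^sup>2 + h\<^sup>2) < sqrt (D'\<^sup>2 + h\<^sup>2)" using assms by (simp add: power_strict_mono)
  moreover have "0 < sqrt (D\<^sup>2 + h\<^sup>2)" using assms by (simp add: add_nonneg_pos)
  ultimately show ?thesis unfolding slope_def using assms by (simp add: divide_strict_left_mono)
qed

lemma slope_mul_pi_le:
  assumes "h > 0" "e > 0" "h * pi / e < D"
  shows "slope h D * pi \<le> e"
proof -
  have bound_pos: "0 < h * pi / e" using assms by simp
  then have "0 < D" using assms(3) by linarith
  then have "slope h D \<le> h / D" using assms(1) by (intro slope_le)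
  also have "\<dots> \<le> h / (h * pi / e)"
    using assms bound_pos \<open>0 < D\<close> by (intro divide_left_mono mult_pos_pos) auto
  also have "\<dots> = e / pi" using assms by simp
  finally show ?thesis by (simp add: field_simps)
qed

lemma mid_height_strict_mono: "v < w \<Longrightarrow> mid_height l z1 z2 v < mid_height l z1 z2 w"
  by (simp add: mid_height_def)

lemma cyl_point_winding:
  "vector [cos (t + 2 * pi * real n), sin (t + 2 * pi * real n), z] = (vector [cos t, sin t, z] :: real^3)"
  using cos_int_2pin[of "int n"] sin_int_2pin[of "int n"] by (simp add: cos_add sin_add)

lemma cyl_int_param:
  assumes "x \<in> cyl_int l"
  obtains t where "x = vector [cos t, sin t, x $ 3]" "0 < x $ 3" "x $ 3 < l"
proof -
  have "(x $ 1)\<^sup>2 + (x $ 2)\<^sup>2 = 1" and height: "0 < x $ 3" "x $ 3 < l"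
    using assms by (auto simp: cyl_int_def)
  then obtain t where "x $ 1 = cos t" "x $ 2 = sin t" using sincos_total_2pi by metis
  then have "x = vector [cos t, sin t, x $ 3]" by (simp add: vec_eq_iff forall_3)
  with height show ?thesis using that by blast
qed

lemma cap_geodesics_distinct_midpoints:
  assumes "0 < z1" "z1 < l" "0 < z2" "z2 < l"
  obtains G :: "nat \<Rightarrow> real \<Rightarrow> real^3"
  where "\<And>k. G k \<in> geods l (vector [cos t1, sin t1, z1]) (vector [cos t2, sin t2, z2])"
    and "inj (\<lambda>k. G k (1/2) $ 3)"
proof -
  define h where "h = 2 * l - z1 - z2"
  define M where "M = h * pi / \<bar>z1 - z2\<bar>"
  obtain K :: nat where K: "M - (t2 - t1 - pi) < 2 * pi * real K"
    using reals_Archimedean2[of "(M - (t2 - t1 - pi)) / (2 * pi)"] by (auto simp: field_simps)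
  define D where "D k = t2 - t1 - pi + 2 * pi * real (K + k)" for k
  have h_pos: "h > 0" and M_nonneg: "M \<ge> 0" using assms by (auto simp: h_def M_def)
  have M_less_D: "M < D k" for k
  proof -
    have "2 * pi * real K \<le> 2 * pi * real (K + k)" by simp
    then show ?thesis using K unfolding D_def by linarith
  qed
  have slope_small: "z1 = z2 \<or> slope h (D k) * pi \<le> \<bar>z1 - z2\<bar>" for k
    using slope_mul_pi_le[OF h_pos, of "\<bar>z1 - z2\<bar>" "D k"] M_less_D[of k] by (auto simp: M_def)
  have "vector [cos (t1 + D k + pi), sin (t1 + D k + pi), z2] = (vector [cos t2, sin t2, z2] :: real^3)"
    for k
  proof -
    have "t1 + D k + pi = t2 + 2 * pi * real (K + k)" by (simp add: D_def)
    then show ?thesis by (simp only: cyl_point_winding)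
  qed
  then have "\<exists>\<gamma> \<in> geods l (vector [cos t1, sin t1, z1]) (vector [cos t2, sin t2, z2]).
    \<gamma> (1/2) $ 3 = mid_height l z1 z2 (slope h (D k))" for k
    using cap_geodesic_exists[OF assms slope_small[of k, unfolded h_def], where \<theta> = t1]
    unfolding h_def by simp
  then obtain G where G: "\<And>k. G k \<in> geods l (vector [cos t1, sin t1, z1]) (vector [cos t2, sin t2, z2])"
    "\<And>k. G k (1/2) $ 3 = mid_height l z1 z2 (slope h (D k))"
    by metis
  have "inj (\<lambda>k. G k (1/2) $ 3)"
  proof (rule linorder_injI)
    fix k k' :: nat
    assume "k < k'"
    then have "slope h (D k') < slope h (D k)"
      using M_less_D[of k] M_nonneg by (intro slope_strict_decreasing h_pos) (auto simp: D_def)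
    then show "G k (1/2) $ 3 \<noteq> G k' (1/2) $ 3" unfolding G(2) by (metis mid_height_strict_mono less_irrefl)
  qed
  with G(1) show ?thesis using that by blast
qed

lemma not_midpoint_secure_if_inj:
  fixes G :: "nat \<Rightarrow> real \<Rightarrow> real^3"
  assumes "\<And>k. G k \<in> geods l x y" "inj (\<lambda>k. G k (1/2))"
  shows "\<not> midpoint_secure l x y"
proof
  assume "midpoint_secure l x y"
  then obtain B where "finite B" "range (\<lambda>k. G k (1/2)) \<subseteq> B"
    using assms(1) unfolding midpoint_secure_def midpoint_blocking_def by blast
  then have "finite (range (\<lambda>k. G k (1/2)))" using finite_subset by blast
  then show False using assms(2) by (metis finite_imageD infinite_UNIV_nat)
qed

theorem lemma4:
  fixes l :: real and x1 x2 :: "real^3"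
  assumes "l > 0" and "x1 \<in> cyl_int l" and "x2 \<in> cyl_int l"
  shows "\<not> midpoint_secure l x1 x2"
proof -
  obtain t1 where x1: "x1 = vector [cos t1, sin t1, x1 $ 3]" "0 < x1 $ 3" "x1 $ 3 < l"
    using cyl_int_param[OF assms(2)] .
  obtain t2 where x2: "x2 = vector [cos t2, sin t2, x2 $ 3]" "0 < x2 $ 3" "x2 $ 3 < l"
    using cyl_int_param[OF assms(3)] .
  obtain G :: "nat \<Rightarrow> real \<Rightarrow> real^3"
    where geods: "\<And>k. G k \<in> geods l x1 x2" and "inj (\<lambda>k. G k (1/2) $ 3)"
    using cap_geodesics_distinct_midpoints[OF x1(2,3) x2(2,3), of t1 t2, folded x1(1) x2(1)] by blast
  then have "inj (\<lambda>k. G k (1/2))" by (intro inj_on_imageI2[of "\<lambda>p. p $ 3"]) (simp add: comp_def)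
  with geods show ?thesis by (rule not_midpoint_secure_if_inj)
qed

end
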